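(* Let $(X,d)$ be a complete metric space with a convex mean $\#$. Then $\#$ inductively $\beta$-extends to a symmetric, nonexpansive, coordinatewise $(1/2)$-contractive $n$-mean for every $n>2$; that is, there are such $n$-means $\mu_n$ ($n\ge3$) with $\mu_3$ a $\beta$-extension of $\#$ and $\mu_{n+1}$ a $\beta$-extension of $\mu_n$.
   Context: A convex mean on a complete metric space $X$ is a symmetric 2-mean $(x,y)\mapsto x\#y$ (so $x\#x=x$, $x\#y=y\#x$) with $d(x\#z,y\#z)\le\frac12 d(x,y)$ for all $x,y,z$. A $k$-mean is a map $\mu:X^k\to X$ with $\mu(x,\ldots,x)=x$; symmetric means permutation invariant. Nonexpansive: $d(\mu(\mathbf{x}),\mu(\mathbf{y}))\le\max_j d(x_j,y_j)$; coordinatewise $\rho$-contractive: $d(\mu(\mathbf{x}),\mu(\mathbf{y}))\le\rho\,d(x_j,y_j)$ when $\mathbf{x},\mathbf{y}$ differ only in coordinate $j$. Barycentric operator of a $k$-mean: $\beta(\mathbf{x})_j=\mu(x_1,\ldots,\widehat{x_j},\ldots,x_{k+1})$; a $(k+1)$-mean $\nu$ $\beta$-extends $\mu$ if $\beta^m(\mathbf{x})\to(\nu(\mathbf{x}),\ldots,\nu(\mathbf{x}))$ for every $\mathbf{x}$. *)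

theory Defs
  imports "HOL-Analysis.Analysis" "HOL-Library.Multiset"
begin

text \<open>A k-mean on X is represented as a function on lists; only its values on
  lists of length k are relevant. Coordinates are indexed 0..k-1.\<close>

definition convex_mean :: "('a::metric_space \<Rightarrow> 'a \<Rightarrow> 'a) \<Rightarrow> bool" where
  "convex_mean m \<longleftrightarrow> (\<forall>x. m x x = x) \<and> (\<forall>x y. m x y = m y x) \<and>
     (\<forall>x y z. dist (m x z) (m y z) \<le> dist x y / 2)"

definition is_kmean :: "nat \<Rightarrow> ('a list \<Rightarrow> 'a) \<Rightarrow> bool" where
  "is_kmean k \<mu> \<longleftrightarrow> (\<forall>x. \<mu> (replicate k x) = x)"

definition symmetric_kmean :: "nat \<Rightarrow> ('a list \<Rightarrow> 'a) \<Rightarrow> bool" where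
  "symmetric_kmean k \<mu> \<longleftrightarrow>
     (\<forall>xs ys. length xs = k \<and> mset ys = mset xs \<longrightarrow> \<mu> ys = \<mu> xs)"

definition nonexpansive_kmean :: "nat \<Rightarrow> ('a::metric_space list \<Rightarrow> 'a) \<Rightarrow> bool" where
  "nonexpansive_kmean k \<mu> \<longleftrightarrow>
     (\<forall>xs ys. length xs = k \<and> length ys = k \<longrightarrow>
        dist (\<mu> xs) (\<mu> ys) \<le> (MAX j\<in>{..<k}. dist (xs ! j) (ys ! j)))"

definition coord_contractive :: "nat \<Rightarrow> real \<Rightarrow> ('a::metric_space list \<Rightarrow> 'a) \<Rightarrow> bool" where
  "coord_contractive k \<rho> \<mu> \<longleftrightarrow>
     (\<forall>xs ys j. length xs = k \<and> length ys = k \<and> j < k \<and>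
        (\<forall>i<k. i \<noteq> j \<longrightarrow> xs ! i = ys ! i) \<longrightarrow>
        dist (\<mu> xs) (\<mu> ys) \<le> \<rho> * dist (xs ! j) (ys ! j))"

definition bary :: "('a list \<Rightarrow> 'a) \<Rightarrow> 'a list \<Rightarrow> 'a list" where
  "bary \<mu> xs = map (\<lambda>j. \<mu> (take j xs @ drop (Suc j) xs)) [0..<length xs]"

text \<open>The (k+1)-mean \<nu> beta-extends the k-mean \<mu>: for every (k+1)-tuple, the
  iterates of the barycentric operator converge (in the product topology,
  i.e. coordinatewise) to the diagonal tuple of \<nu>.\<close>
definition beta_extends :: "nat \<Rightarrow> ('a::metric_space list \<Rightarrow> 'a) \<Rightarrow> ('a list \<Rightarrow> 'a) \<Rightarrow> bool" where
  "beta_extends k \<mu> \<nu> \<longleftrightarrow>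
     (\<forall>xs. length xs = Suc k \<longrightarrow>
        (\<forall>j<Suc k. (\<lambda>m. ((bary \<mu> ^^ m) xs) ! j) \<longlonglongrightarrow> \<nu> xs))"

end

theory Submission
  imports Defs
begin

(* For a symmetric, nonexpansive, coordinatewise \<rho>-contractive k-mean \<mu> with \<rho> < 1, one
   barycentric step shrinks the distance between any two coordinates of a (k+1)-tuple by \<rho>:
   the two new entries are means of tuples that, up to a permutation, differ in a single entry,
   x_i against x_j. Idempotency and nonexpansiveness bound the movement of each coordinate by the
   current diameter, so the iterates converge geometrically to a common limit, the (k+1)-mean.
   Idempotency, symmetry and nonexpansiveness pass to the limit; \<rho>-contractivity survives
   because the limit is invariant under the barycentric operator, one step of which turns a
   change in one coordinate into changes at most \<rho> times as large in all coordinates.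
   A convex mean is such a 2-mean with \<rho> = 1/2. *)

lemma Cauchy_if_dist_le_tendsto_zero:
  fixes f :: "nat \<Rightarrow> 'a::metric_space"
  assumes g: "g \<longlonglongrightarrow> 0" and le: "\<And>m n. m \<le> n \<Longrightarrow> dist (f m) (f n) \<le> g m"
  shows "Cauchy f"
  unfolding Cauchy_altdef2
proof (intro allI impI)
  fix e :: real assume "e > 0"
  then obtain N where "\<bar>g N\<bar> < e"
    using g by (force simp: LIMSEQ_def dist_real_def)
  then have "\<forall>n\<ge>N. dist (f n) (f N) < e"
    using le by (fastforce simp: dist_commute)
  then show "\<exists>N. \<forall>n\<ge>N. dist (f n) (f N) < e" ..
qed

lemma Cauchy_if_dist_Suc_le_geometric:
  fixes f :: "nat \<Rightarrow> 'a::metric_space"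
  assumes c: "0 \<le> c" "c < 1" and step: "\<And>m. dist (f (Suc m)) (f m) \<le> C * c ^ m"
  shows "Cauchy f"
proof (rule Cauchy_if_dist_le_tendsto_zero)
  have "C \<ge> 0"
    using order_trans[OF zero_le_dist step[of 0]] by simp
  have telescope: "dist (f m) (f (m + p)) \<le> C * (c ^ m - c ^ (m + p)) / (1 - c)" for m p
  proof (induction p)
    case (Suc p)
    have "dist (f m) (f (m + Suc p)) \<le> dist (f m) (f (m + p)) + dist (f (Suc (m + p))) (f (m + p))"
      using dist_triangle[of "f m" "f (m + Suc p)" "f (m + p)"] by (simp add: dist_commute)
    also have "\<dots> \<le> C * (c ^ m - c ^ (m + p)) / (1 - c) + C * c ^ (m + p)"
      using Suc step[of "m + p"] by linarith
    also have "\<dots> = C * (c ^ m - c ^ (m + Suc p)) / (1 - c)"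
      using c by (simp add: field_simps)
    finally show ?case .
  qed simp
  show "dist (f m) (f n) \<le> C * c ^ m / (1 - c)" if "m \<le> n" for m n
  proof -
    obtain p where "n = m + p"
      using \<open>m \<le> n\<close> le_Suc_ex by blast
    moreover have "C * (c ^ m - c ^ (m + p)) \<le> C * c ^ m"
      using \<open>C \<ge> 0\<close> c by (simp add: mult_left_mono)
    ultimately show ?thesis
      using telescope[of m p] c by (meson divide_right_mono diff_ge_0_iff_ge less_imp_le order_trans)
  qed
  show "(\<lambda>m. C * c ^ m / (1 - c)) \<longlonglongrightarrow> 0"
    using c by (intro tendsto_divide_zero tendsto_mult_right_zero LIMSEQ_power_zero) simp
qed

lemma tendsto_if_dist_le_tendsto_zero:
  fixes X Y :: "nat \<Rightarrow> 'a::metric_space"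
  assumes X: "X \<longlonglongrightarrow> L" and g: "g \<longlonglongrightarrow> 0" and le: "\<And>n. dist (Y n) (X n) \<le> g n"
  shows "Y \<longlonglongrightarrow> L"
proof (rule tendsto_dist_iff[THEN iffD2])
  have "(\<lambda>n. g n + dist (X n) L) \<longlonglongrightarrow> 0 + 0"
    using g X[THEN tendsto_dist_iff[THEN iffD1]] by (rule tendsto_add)
  then have upper: "(\<lambda>n. g n + dist (X n) L) \<longlonglongrightarrow> 0"
    by simp
  have "dist (Y n) L \<le> g n + dist (X n) L" for n
    using le[of n] dist_triangle[of "Y n" L "X n"] by linarith
  then show "(\<lambda>n. dist (Y n) L) \<longlonglongrightarrow> 0"
    by (intro tendsto_sandwich[OF _ _ tendsto_const upper]) (simp_all add: always_eventually)
qed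


definition remove_nth :: "nat \<Rightarrow> 'a list \<Rightarrow> 'a list" where
  "remove_nth j xs = take j xs @ drop (Suc j) xs"

lemma length_remove_nth [simp]: "j < length xs \<Longrightarrow> length (remove_nth j xs) = length xs - 1"
  unfolding remove_nth_def by simp

lemma nth_remove_nth:
  "l < length xs - 1 \<Longrightarrow> remove_nth j xs ! l = xs ! (if l < j then l else Suc l)"
  unfolding remove_nth_def by (auto simp: nth_append min_def)

lemma mset_remove_nth: "j < length xs \<Longrightarrow> mset (remove_nth j xs) = mset xs - {#xs ! j#}"
  unfolding remove_nth_def by (subst (2) id_take_nth_drop[of j xs]) simp_all

lemma remove_nth_replicate: "j < n \<Longrightarrow> remove_nth j (replicate n x) = replicate (n - 1) x"
  unfolding remove_nth_def by (simp add: replicate_add[symmetric])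

lemma length_bary [simp]: "length (bary \<mu> xs) = length xs"
  unfolding bary_def by simp

lemma length_funpow_bary [simp]: "length ((bary \<mu> ^^ m) xs) = length xs"
  by (induction m) auto

lemma nth_bary: "j < length xs \<Longrightarrow> bary \<mu> xs ! j = \<mu> (remove_nth j xs)"
  unfolding bary_def remove_nth_def by simp

lemma bary_replicate: "bary \<mu> (replicate n x) = replicate n (\<mu> (replicate (n - 1) x))"
  by (rule nth_equalityI) (auto simp: nth_bary remove_nth_replicate)

lemma symmetric_kmeanD:
  "symmetric_kmean k \<mu> \<Longrightarrow> length xs = k \<Longrightarrow> mset ys = mset xs \<Longrightarrow> \<mu> ys = \<mu> xs"
  unfolding symmetric_kmean_def by blast

lemma coord_contractiveD:
  assumes "coord_contractive k \<rho> \<mu>" "length xs = k" "length ys = k" "j < k"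
    and "\<And>i. i < k \<Longrightarrow> i \<noteq> j \<Longrightarrow> xs ! i = ys ! i"
  shows "dist (\<mu> xs) (\<mu> ys) \<le> \<rho> * dist (xs ! j) (ys ! j)"
  using assms unfolding coord_contractive_def by blast

lemma nonexpansive_kmean_dist_le:
  assumes "nonexpansive_kmean k \<mu>" "0 < k" "length xs = k" "length ys = k"
    and "\<And>j. j < k \<Longrightarrow> dist (xs ! j) (ys ! j) \<le> E"
  shows "dist (\<mu> xs) (\<mu> ys) \<le> E"
proof -
  have "dist (\<mu> xs) (\<mu> ys) \<le> (MAX j\<in>{..<k}. dist (xs ! j) (ys ! j))"
    using assms(1,3,4) unfolding nonexpansive_kmean_def by blast
  also have "\<dots> \<le> E"
    using assms(2,5) by (subst Max_le_iff) auto
  finally show ?thesis .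
qed

lemma bary_pairwise_contraction:
  assumes sym: "symmetric_kmean k \<mu>" and contr: "coord_contractive k \<rho> \<mu>"
    and len: "length xs = Suc k" and "i < Suc k" "j < Suc k"
  shows "dist (bary \<mu> xs ! i) (bary \<mu> xs ! j) \<le> \<rho> * dist (xs ! i) (xs ! j)"
proof -
  have less: "dist (bary \<mu> xs ! i) (bary \<mu> xs ! j) \<le> \<rho> * dist (xs ! i) (xs ! j)"
    if ij: "i < j" "j < Suc k" for i j
  proof -
    \<comment> \<open>a permutation of \<open>remove_nth j xs\<close> that differs from \<open>remove_nth i xs\<close> only at \<open>j - 1\<close>\<close>
    define ys where "ys = remove_nth i (xs[j := xs ! i])"
    have "mset ys = mset (remove_nth j xs)"
      using len ij by (simp add: ys_def mset_remove_nth mset_update)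
    then have "\<mu> ys = \<mu> (remove_nth j xs)"
      using len ij by (intro symmetric_kmeanD[OF sym]) simp
    moreover have "dist (\<mu> (remove_nth i xs)) (\<mu> ys)
        \<le> \<rho> * dist (remove_nth i xs ! (j - 1)) (ys ! (j - 1))"
      using len ij by (intro coord_contractiveD[OF contr]) (auto simp: ys_def nth_remove_nth)
    moreover have "remove_nth i xs ! (j - 1) = xs ! j" "ys ! (j - 1) = xs ! i"
      using len ij by (auto simp: ys_def nth_remove_nth)
    ultimately show ?thesis
      using len ij by (simp add: nth_bary dist_commute)
  qed
  consider "i < j" | "i = j" | "j < i"
    by linarith
  then show ?thesis
  proof cases
    case 1
    then show ?thesis using less assms(5) by blast
  next
    case 2
    then show ?thesis by simp
  next
    case 3
    then show ?thesis using less[of j i] assms(4) by (simp add: dist_commute)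
  qed
qed

lemma dist_bary_self_le:
  assumes mean: "is_kmean k \<mu>" and nonexp: "nonexpansive_kmean k \<mu>" and k: "0 < k"
    and len: "length xs = Suc k" and i: "i < Suc k"
    and diam: "\<And>i j. i < Suc k \<Longrightarrow> j < Suc k \<Longrightarrow> dist (xs ! i) (xs ! j) \<le> D"
  shows "dist (bary \<mu> xs ! i) (xs ! i) \<le> D"
proof -
  have "dist (\<mu> (remove_nth i xs)) (\<mu> (replicate k (xs ! i))) \<le> D"
    using len i diam by (intro nonexpansive_kmean_dist_le[OF nonexp k]) (auto simp: nth_remove_nth)
  then show ?thesis
    using mean len i by (simp add: nth_bary is_kmean_def)
qed

lemma bary_nonexpansive:
  assumes nonexp: "nonexpansive_kmean k \<mu>" and k: "0 < k"
    and len: "length xs = Suc k" "length ys = Suc k" and l: "l < Suc k"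
    and le: "\<And>j. j < Suc k \<Longrightarrow> dist (xs ! j) (ys ! j) \<le> E"
  shows "dist (bary \<mu> xs ! l) (bary \<mu> ys ! l) \<le> E"
proof -
  have "dist (\<mu> (remove_nth l xs)) (\<mu> (remove_nth l ys)) \<le> E"
    using len l le by (intro nonexpansive_kmean_dist_le[OF nonexp k]) (auto simp: nth_remove_nth)
  then show ?thesis
    using len l by (simp add: nth_bary)
qed

lemma bary_coord_contractive:
  assumes contr: "coord_contractive k \<rho> \<mu>" and "0 \<le> \<rho>"
    and len: "length xs = Suc k" "length ys = Suc k" and j: "j < Suc k" and l: "l < Suc k"
    and same: "\<And>i. i < Suc k \<Longrightarrow> i \<noteq> j \<Longrightarrow> xs ! i = ys ! i"
  shows "dist (bary \<mu> xs ! l) (bary \<mu> ys ! l) \<le> \<rho> * dist (xs ! j) (ys ! j)"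
proof (cases "l = j")
  case True
  then have "remove_nth l xs = remove_nth l ys"
    using len j same by (intro nth_equalityI) (auto simp: nth_remove_nth)
  then show ?thesis
    using len l \<open>0 \<le> \<rho>\<close> by (simp add: nth_bary)
next
  case False
  define j' where "j' = (if j < l then j else j - 1)"
  have "dist (\<mu> (remove_nth l xs)) (\<mu> (remove_nth l ys))
      \<le> \<rho> * dist (remove_nth l xs ! j') (remove_nth l ys ! j')"
    using len l j same False
    by (intro coord_contractiveD[OF contr]) (auto simp: nth_remove_nth j'_def split: if_splits)
  moreover have "remove_nth l xs ! j' = xs ! j" "remove_nth l ys ! j' = ys ! j"
    using len l j False by (auto simp: nth_remove_nth j'_def)
  ultimately show ?thesis
    using len l by (simp add: nth_bary)
qed

lemma mset_bary_cong:
  assumes sym: "symmetric_kmean k \<mu>" and len: "length xs = Suc k" and ms: "mset ys = mset xs"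
  shows "mset (bary \<mu> ys) = mset (bary \<mu> xs)"
proof -
  \<comment> \<open>\<open>\<mu>\<close> read as a function of multisets, which is well defined by symmetry\<close>
  define F where "F M = \<mu> (SOME zs. mset zs = M)" for M
  have "bary \<mu> zs = map (\<lambda>a. F (mset zs - {#a#})) zs" if "length zs = Suc k" for zs
  proof (rule nth_equalityI)
    fix j assume "j < length (bary \<mu> zs)"
    then have j: "j < length zs"
      by simp
    have "mset (SOME ws. mset ws = mset (remove_nth j zs)) = mset (remove_nth j zs)"
      by (rule someI_ex) blast
    then have "F (mset zs - {#zs ! j#}) = \<mu> (remove_nth j zs)"
      using that j by (simp add: F_def mset_remove_nth symmetric_kmeanD[OF sym])
    then show "bary \<mu> zs ! j = map (\<lambda>a. F (mset zs - {#a#})) zs ! j"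
      using j by (simp add: nth_bary)
  qed simp
  then show ?thesis
    using len ms by (metis mset_map size_mset)
qed

text \<open>Coordinate 0 is an arbitrary choice: for the means considered below all coordinates of the
  iterates converge to the same limit.\<close>
definition beta_ext :: "('a::metric_space list \<Rightarrow> 'a) \<Rightarrow> 'a list \<Rightarrow> 'a" where
  "beta_ext \<mu> xs = lim (\<lambda>m. (bary \<mu> ^^ m) xs ! 0)"

locale contractive_kmean =
  fixes k :: nat and \<rho> :: real and \<mu> :: "'a::complete_space list \<Rightarrow> 'a"
  assumes arity_pos: "0 < k"
    and rho_nonneg: "0 \<le> \<rho>" and rho_less_one: "\<rho> < 1"
    and mean: "is_kmean k \<mu>"
    and symmetric: "symmetric_kmean k \<mu>"
    and nonexpansive: "nonexpansive_kmean k \<mu>"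
    and contractive: "coord_contractive k \<rho> \<mu>"
begin

lemma geometric_tendsto_zero: "(\<lambda>m. \<rho> ^ m * c) \<longlonglongrightarrow> 0"
  using rho_nonneg rho_less_one by (intro tendsto_mult_left_zero LIMSEQ_power_zero) simp

lemma dist_bary_iter_nth_le:
  assumes len: "length xs = Suc k" and "i < Suc k" "j < Suc k"
  shows "dist ((bary \<mu> ^^ m) xs ! i) ((bary \<mu> ^^ m) xs ! j) \<le> \<rho> ^ m * diameter (set xs)"
  using assms(2,3)
proof (induction m arbitrary: i j)
  case 0
  then show ?case
    using len by (simp add: diameter_bounded_bound finite_imp_bounded)
next
  case (Suc m)
  have "dist ((bary \<mu> ^^ Suc m) xs ! i) ((bary \<mu> ^^ Suc m) xs ! j)
      \<le> \<rho> * dist ((bary \<mu> ^^ m) xs ! i) ((bary \<mu> ^^ m) xs ! j)"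
    using len Suc.prems by (simp add: bary_pairwise_contraction[OF symmetric contractive])
  also have "\<dots> \<le> \<rho> * (\<rho> ^ m * diameter (set xs))"
    using Suc by (intro mult_left_mono rho_nonneg) auto
  finally show ?case
    by simp
qed

lemma dist_bary_iter_Suc_le:
  assumes len: "length xs = Suc k" and i: "i < Suc k"
  shows "dist ((bary \<mu> ^^ Suc m) xs ! i) ((bary \<mu> ^^ m) xs ! i) \<le> diameter (set xs) * \<rho> ^ m"
  using dist_bary_self_le[OF mean nonexpansive arity_pos _ i dist_bary_iter_nth_le[OF len]] len
  by (simp add: mult.commute)

lemma tendsto_bary_iter_nth:
  assumes len: "length xs = Suc k" and i: "i < Suc k"
  shows "(\<lambda>m. (bary \<mu> ^^ m) xs ! i) \<longlonglongrightarrow> beta_ext \<mu> xs"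
proof -
  have "Cauchy (\<lambda>m. (bary \<mu> ^^ m) xs ! 0)"
    by (rule Cauchy_if_dist_Suc_le_geometric[OF rho_nonneg rho_less_one
          dist_bary_iter_Suc_le[OF len zero_less_Suc]])
  then have "(\<lambda>m. (bary \<mu> ^^ m) xs ! 0) \<longlonglongrightarrow> beta_ext \<mu> xs"
    unfolding beta_ext_def by (rule Cauchy_convergent[THEN convergent_LIMSEQ_iff[THEN iffD1]])
  then show ?thesis
    by (rule tendsto_if_dist_le_tendsto_zero[OF _ geometric_tendsto_zero[of "diameter (set xs)"]])
      (simp add: dist_bary_iter_nth_le len i)
qed

lemma beta_extends_beta_ext: "beta_extends k \<mu> (beta_ext \<mu>)"
  unfolding beta_extends_def using tendsto_bary_iter_nth by blast

lemma beta_ext_bary: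
  assumes len: "length xs = Suc k"
  shows "beta_ext \<mu> (bary \<mu> xs) = beta_ext \<mu> xs"
proof -
  have "(\<lambda>m. (bary \<mu> ^^ Suc m) xs ! 0) \<longlonglongrightarrow> beta_ext \<mu> (bary \<mu> xs)"
    using tendsto_bary_iter_nth[of "bary \<mu> xs" 0] len by (simp add: funpow_swap1)
  moreover have "(\<lambda>m. (bary \<mu> ^^ Suc m) xs ! 0) \<longlonglongrightarrow> beta_ext \<mu> xs"
    using tendsto_bary_iter_nth[OF len zero_less_Suc] by (rule LIMSEQ_Suc)
  ultimately show ?thesis
    by (rule LIMSEQ_unique)
qed

lemma beta_ext_replicate: "beta_ext \<mu> (replicate (Suc k) x) = x"
proof -
  have "(bary \<mu> ^^ m) (replicate (Suc k) x) = replicate (Suc k) x" for m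
    using mean by (induction m) (simp_all add: bary_replicate is_kmean_def del: replicate_Suc)
  then show ?thesis
    using tendsto_bary_iter_nth[of "replicate (Suc k) x" 0] by (simp add: LIMSEQ_const_iff)
qed

lemma dist_beta_ext_le:
  assumes len: "length xs = Suc k" "length ys = Suc k"
    and le: "\<And>j. j < Suc k \<Longrightarrow> dist (xs ! j) (ys ! j) \<le> E"
  shows "dist (beta_ext \<mu> xs) (beta_ext \<mu> ys) \<le> E"
proof -
  have iter: "dist ((bary \<mu> ^^ m) xs ! j) ((bary \<mu> ^^ m) ys ! j) \<le> E" if "j < Suc k" for m j
    using that
  proof (induction m arbitrary: j)
    case (Suc m)
    have "dist (bary \<mu> ((bary \<mu> ^^ m) xs) ! j) (bary \<mu> ((bary \<mu> ^^ m) ys) ! j) \<le> E"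
      by (rule bary_nonexpansive[OF nonexpansive arity_pos]) (use len Suc in auto)
    then show ?case
      by simp
  qed (use le in simp)
  have "(\<lambda>m. dist ((bary \<mu> ^^ m) xs ! 0) ((bary \<mu> ^^ m) ys ! 0))
      \<longlonglongrightarrow> dist (beta_ext \<mu> xs) (beta_ext \<mu> ys)"
    using len by (intro tendsto_dist tendsto_bary_iter_nth) auto
  then show ?thesis
    by (rule LIMSEQ_le_const2) (use iter in auto)
qed

lemma beta_ext_mset_cong:
  assumes len: "length xs = Suc k" and ms: "mset ys = mset xs"
  shows "beta_ext \<mu> ys = beta_ext \<mu> xs"
proof -
  have leny: "length ys = Suc k"
    using len ms by (metis size_mset)
  have ms_iter: "mset ((bary \<mu> ^^ m) ys) = mset ((bary \<mu> ^^ m) xs)" for m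
  proof (induction m)
    case (Suc m)
    then show ?case
      using mset_bary_cong[OF symmetric, of "(bary \<mu> ^^ m) xs" "(bary \<mu> ^^ m) ys"] len by simp
  qed (use ms in simp)
  have "dist ((bary \<mu> ^^ m) ys ! 0) ((bary \<mu> ^^ m) xs ! 0) \<le> \<rho> ^ m * diameter (set xs)" for m
  proof -
    have "(bary \<mu> ^^ m) ys ! 0 \<in> set ((bary \<mu> ^^ m) xs)"
      using leny ms_iter[of m] by (metis mset_eq_setD length_funpow_bary nth_mem zero_less_Suc)
    then obtain l where "l < Suc k" "(bary \<mu> ^^ m) ys ! 0 = (bary \<mu> ^^ m) xs ! l"
      using len by (auto simp: in_set_conv_nth)
    then show ?thesis
      using dist_bary_iter_nth_le[OF len] by simp
  qed
  then have "(\<lambda>m. (bary \<mu> ^^ m) ys ! 0) \<longlonglongrightarrow> beta_ext \<mu> xs"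
    by (rule tendsto_if_dist_le_tendsto_zero[OF tendsto_bary_iter_nth[OF len zero_less_Suc]
          geometric_tendsto_zero])
  with tendsto_bary_iter_nth[OF leny zero_less_Suc] show ?thesis
    by (rule LIMSEQ_unique)
qed

lemma contractive_kmean_beta_ext: "contractive_kmean (Suc k) \<rho> (beta_ext \<mu>)"
proof
  show "is_kmean (Suc k) (beta_ext \<mu>)"
    unfolding is_kmean_def by (simp add: beta_ext_replicate del: replicate_Suc)
  show "symmetric_kmean (Suc k) (beta_ext \<mu>)"
    unfolding symmetric_kmean_def by (auto intro: beta_ext_mset_cong)
  show "nonexpansive_kmean (Suc k) (beta_ext \<mu>)"
    unfolding nonexpansive_kmean_def by (intro allI impI dist_beta_ext_le) (auto intro: Max_ge)
  show "coord_contractive (Suc k) \<rho> (beta_ext \<mu>)"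
    unfolding coord_contractive_def
  proof (intro allI impI, elim conjE)
    fix xs ys :: "'a list" and j
    assume len: "length xs = Suc k" "length ys = Suc k" and j: "j < Suc k"
      and same: "\<forall>i<Suc k. i \<noteq> j \<longrightarrow> xs ! i = ys ! i"
    have "dist (beta_ext \<mu> (bary \<mu> xs)) (beta_ext \<mu> (bary \<mu> ys)) \<le> \<rho> * dist (xs ! j) (ys ! j)"
      using len j same
      by (intro dist_beta_ext_le bary_coord_contractive[OF contractive rho_nonneg]) auto
    then show "dist (beta_ext \<mu> xs) (beta_ext \<mu> ys) \<le> \<rho> * dist (xs ! j) (ys ! j)"
      using len by (simp add: beta_ext_bary)
  qed
qed (use rho_nonneg rho_less_one in auto)

end

lemma convex_mean_dist_le:
  assumes "convex_mean mid"
  shows "dist (mid a b) (mid c d) \<le> dist a c / 2 + dist b d / 2"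
proof -
  have commute: "mid x y = mid y x" and half: "dist (mid x z) (mid y z) \<le> dist x y / 2" for x y z
    using assms unfolding convex_mean_def by blast+
  have "dist (mid a b) (mid c d) \<le> dist (mid a b) (mid c b) + dist (mid b c) (mid d c)"
    using dist_triangle[of "mid a b" "mid c d" "mid c b"] commute by metis
  also have "\<dots> \<le> dist a c / 2 + dist b d / 2"
    using half[where x = a and y = c and z = b] half[where x = b and y = d and z = c]
    by (rule add_mono)
  finally show ?thesis .
qed

lemma contractive_kmean_convex_mean:
  fixes mid :: "'a::complete_space \<Rightarrow> 'a \<Rightarrow> 'a"
  assumes mid: "convex_mean mid"
  shows "contractive_kmean 2 (1/2) (\<lambda>xs. mid (xs ! 0) (xs ! 1))"
proof
  have pair: "\<exists>a b. xs = [a, b]" if "length xs = 2" for xs :: "'a list"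
    using that by (metis length_0_conv length_Suc_conv numeral_2_eq_2)
  have commute: "mid a b = mid b a" for a b
    using mid unfolding convex_mean_def by blast
  show "is_kmean 2 (\<lambda>xs. mid (xs ! 0) (xs ! 1))"
    using mid unfolding is_kmean_def convex_mean_def by (simp add: numeral_2_eq_2)
  show "symmetric_kmean 2 (\<lambda>xs. mid (xs ! 0) (xs ! 1))"
    unfolding symmetric_kmean_def
  proof (intro allI impI, elim conjE)
    fix xs ys :: "'a list" assume len: "length xs = 2" and ms: "mset ys = mset xs"
    obtain a b where xs: "xs = [a, b]"
      using pair len by blast
    obtain c d where ys: "ys = [c, d]"
      using pair[of ys] ms len by (metis size_mset)
    have "{#c, d#} = {#a, b#}"
      using ms by (simp add: xs ys)
    then have "c = a \<and> d = b \<or> c = b \<and> d = a"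
      by (auto simp: add_eq_conv_ex)
    then show "mid (ys ! 0) (ys ! 1) = mid (xs ! 0) (xs ! 1)"
      using commute by (auto simp: xs ys)
  qed
  show "nonexpansive_kmean 2 (\<lambda>xs. mid (xs ! 0) (xs ! 1))"
    unfolding nonexpansive_kmean_def
  proof (intro allI impI)
    fix xs ys :: "'a list"
    have "{..<2::nat} = {0, 1}"
      by auto
    then show "dist (mid (xs ! 0) (xs ! 1)) (mid (ys ! 0) (ys ! 1))
        \<le> (MAX j\<in>{..<2}. dist (xs ! j) (ys ! j))"
      using convex_mean_dist_le[OF mid, of "xs ! 0" "xs ! 1" "ys ! 0" "ys ! 1"] by simp
  qed
  show "coord_contractive 2 (1/2) (\<lambda>xs. mid (xs ! 0) (xs ! 1))"
    unfolding coord_contractive_def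
  proof (intro allI impI, elim conjE)
    fix xs ys :: "'a list" and j :: nat
    assume "j < 2" and same: "\<forall>i<2. i \<noteq> j \<longrightarrow> xs ! i = ys ! i"
    then have "j = 0 \<and> xs ! 1 = ys ! 1 \<or> j = 1 \<and> xs ! 0 = ys ! 0"
      by (auto simp: less_2_cases_iff)
    then show "dist (mid (xs ! 0) (xs ! 1)) (mid (ys ! 0) (ys ! 1)) \<le> 1/2 * dist (xs ! j) (ys ! j)"
      using convex_mean_dist_le[OF mid, of "xs ! 0" "xs ! 1" "ys ! 0" "ys ! 1"] by auto
  qed
qed simp_all

theorem proposition4p4:
  fixes mid :: "'a::{metric_space, complete_space} \<Rightarrow> 'a \<Rightarrow> 'a"
  assumes "convex_mean mid"
  shows "\<exists>\<mu> :: nat \<Rightarrow> 'a list \<Rightarrow> 'a.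
     (\<forall>n\<ge>3. is_kmean n (\<mu> n) \<and> symmetric_kmean n (\<mu> n) \<and>
             nonexpansive_kmean n (\<mu> n) \<and> coord_contractive n (1/2) (\<mu> n)) \<and>
     beta_extends 2 (\<lambda>xs. mid (xs ! 0) (xs ! 1)) (\<mu> 3) \<and>
     (\<forall>n\<ge>3. beta_extends n (\<mu> n) (\<mu> (Suc n)))"
proof -
  define \<mu> where "\<mu> n = (beta_ext ^^ (n - 2)) (\<lambda>xs. mid (xs ! 0) (xs ! 1))" for n
  have \<mu>_Suc: "\<mu> (Suc n) = beta_ext (\<mu> n)" if "2 \<le> n" for n
    using that by (auto simp: \<mu>_def dest!: le_Suc_ex)
  have contractive: "contractive_kmean n (1/2) (\<mu> n)" if "2 \<le> n" for n
    using that
  proof (induction n rule: dec_induct)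
    case base
    then show ?case
      using contractive_kmean_convex_mean[OF assms] by (simp add: \<mu>_def)
  next
    case (step n)
    then show ?case
      using contractive_kmean.contractive_kmean_beta_ext \<mu>_Suc by simp
  qed
  have extends: "beta_extends n (\<mu> n) (\<mu> (Suc n))" if "2 \<le> n" for n
    using contractive_kmean.beta_extends_beta_ext[OF contractive[OF that]] \<mu>_Suc[OF that] by simp
  have "\<mu> 2 = (\<lambda>xs. mid (xs ! 0) (xs ! 1))"
    by (simp add: \<mu>_def)
  with extends[of 2] have "beta_extends 2 (\<lambda>xs. mid (xs ! 0) (xs ! 1)) (\<mu> 3)"
    by (simp add: numeral_3_eq_3)
  with contractive extends show ?thesis
    unfolding contractive_kmean_def by (intro exI[of _ \<mu>]) auto
qed

end
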